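(* Let $X$ be a complex separable Hilbert space, $A\in\mathcal B(X)$, $0<\tau<\infty$, and let $\mathcal G\subset X$ be a countable Bessel system. The following are equivalent: (1) $\{e^{tA^*}g\}_{g\in\mathcal G,\,t\in[0,\tau)}$ is a semi-continuous frame for $X$; (2) there exists $\delta>0$ such that for every finite set $T=\{t_1,\dots,t_n\}$ with $0=t_1<t_2<\dots<t_n\le t_{n+1}:=\tau$ and $|t_{i+1}-t_i|<\delta$ for all $i\in\{1,\dots,n\}$, the system $\{e^{tA^*}g\}_{g\in\mathcal G,\,t\in T}$ is a frame for $X$; (3) there exists a finite set $T=\{t_1,\dots,t_n\}$ with $0=t_1<t_2<\dots<t_n\le\tau$ such that $\{e^{tA^*}g\}_{g\in\mathcal G,\,t\in T}$ is a frame for $X$.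
   Context: $e^{tA^*}=\sum_{n\ge0}(tA^* )^n/n!$. A countable family $\{f_j\}$ in $X$ is a Bessel system if $\sum_j|\langle x,f_j\rangle|^2\le C\|x\|^2$ for all $x$, and a frame if additionally $\sum_j|\langle x,f_j\rangle|^2\ge c\|x\|^2$ for some $c>0$. The family $\{e^{tA^*}g\}_{g\in\mathcal G,t\in[0,\tau)}$ is a semi-continuous frame if there are $c_1,c_2>0$ with $c_1\|x\|^2\le\sum_{g\in\mathcal G}\int_0^\tau|\langle x,e^{tA^*}g\rangle|^2dt\le c_2\|x\|^2$ for all $x\in X$. *)

theory Defs
  imports "HOL-Analysis.Analysis"
begin

text \<open>The inner product is linear in the first argument
  and conjugate-linear in the second.\<close>

class chilbert = real_normed_vector + complete_space +
  fixes scaleC :: "complex \<Rightarrow> 'a \<Rightarrow> 'a"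
    and cinner :: "'a \<Rightarrow> 'a \<Rightarrow> complex"
  assumes scaleC_add_right: "scaleC a (x + y) = scaleC a x + scaleC a y"
    and scaleC_add_left: "scaleC (a + b) x = scaleC a x + scaleC b x"
    and scaleC_scaleC: "scaleC a (scaleC b x) = scaleC (a * b) x"
    and scaleC_one: "scaleC 1 x = x"
    and scaleR_scaleC: "scaleR r x = scaleC (complex_of_real r) x"
    and cinner_add_left: "cinner (x + y) z = cinner x z + cinner y z"
    and cinner_scaleC_left: "cinner (scaleC a x) y = a * cinner x y"
    and cinner_commute: "cinner x y = cnj (cinner y x)"
    and norm_eq_sqrt_cinner: "norm x = sqrt (Re (cinner x x))"

text \<open>The class is consistent: the complex numbers form a complex Hilbert space.\<close>
instantiation complex :: chilbert
begin
definition scaleC_complex :: "complex \<Rightarrow> complex \<Rightarrow> complex" where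
  "scaleC_complex a x = a * x"
definition cinner_complex :: "complex \<Rightarrow> complex \<Rightarrow> complex" where
  "cinner_complex x y = x * cnj y"
instance
proof
  fix a b x y z :: complex and r :: real
  show "scaleC a (x + y) = scaleC a x + scaleC a y" by (simp add: scaleC_complex_def algebra_simps)
  show "scaleC (a + b) x = scaleC a x + scaleC b x" by (simp add: scaleC_complex_def algebra_simps)
  show "scaleC a (scaleC b x) = scaleC (a * b) x" by (simp add: scaleC_complex_def algebra_simps)
  show "scaleC 1 x = x" by (simp add: scaleC_complex_def)
  show "r *\<^sub>R x = scaleC (complex_of_real r) x" by (simp add: scaleC_complex_def scaleR_conv_of_real)
  show "cinner (x + y) z = cinner x z + cinner y z" by (simp add: cinner_complex_def algebra_simps)
  show "cinner (scaleC a x) y = a * cinner x y" by (simp add: cinner_complex_def scaleC_complex_def)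
  show "cinner x y = cnj (cinner y x)" by (simp add: cinner_complex_def)
  show "norm x = sqrt (Re (cinner x x))"
    by (simp add: cinner_complex_def complex_mult_cnj cmod_def)
qed
end

definition bounded_clinear_op :: "('a::chilbert \<Rightarrow> 'a) \<Rightarrow> bool" where
  "bounded_clinear_op A \<longleftrightarrow>
     (\<forall>x y. A (x + y) = A x + A y) \<and>
     (\<forall>c x. A (scaleC c x) = scaleC c (A x)) \<and>
     (\<exists>K. \<forall>x. norm (A x) \<le> K * norm x)"

text \<open>The Hilbert-space adjoint (exists uniquely for bounded operators by Riesz).\<close>
definition adjoint_op :: "('a::chilbert \<Rightarrow> 'a) \<Rightarrow> ('a \<Rightarrow> 'a)" where
  "adjoint_op A = (SOME B. \<forall>x y. cinner (A x) y = cinner x (B y))"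

definition exp_op :: "real \<Rightarrow> ('a::chilbert \<Rightarrow> 'a) \<Rightarrow> 'a \<Rightarrow> 'a" where
  "exp_op t B g = (\<Sum>n. (t ^ n / fact n) *\<^sub>R (B ^^ n) g)"

definition bessel_family :: "'i set \<Rightarrow> ('i \<Rightarrow> 'a::chilbert) \<Rightarrow> bool" where
  "bessel_family I f \<longleftrightarrow> (\<exists>C. \<forall>x.
      (\<lambda>i. (cmod (cinner x (f i)))\<^sup>2) summable_on I \<and>
      (\<Sum>\<^sub>\<infinity>i\<in>I. (cmod (cinner x (f i)))\<^sup>2) \<le> C * (norm x)\<^sup>2)"

definition frame_family :: "'i set \<Rightarrow> ('i \<Rightarrow> 'a::chilbert) \<Rightarrow> bool" where
  "frame_family I f \<longleftrightarrow> bessel_family I f \<and> (\<exists>c>0. \<forall>x.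
      c * (norm x)\<^sup>2 \<le> (\<Sum>\<^sub>\<infinity>i\<in>I. (cmod (cinner x (f i)))\<^sup>2))"

definition semicont_frame :: "('a::chilbert \<Rightarrow> 'a) \<Rightarrow> 'a set \<Rightarrow> real \<Rightarrow> bool" where
  "semicont_frame A G \<tau> \<longleftrightarrow> (\<exists>c1>0. \<exists>c2>0. \<forall>x.
      (\<forall>g\<in>G. (\<lambda>t. (cmod (cinner x (exp_op t (adjoint_op A) g)))\<^sup>2) integrable_on {0..<\<tau>}) \<and>
      (\<lambda>g. integral {0..<\<tau>} (\<lambda>t. (cmod (cinner x (exp_op t (adjoint_op A) g)))\<^sup>2)) summable_on G \<and>
      c1 * (norm x)\<^sup>2 \<le> (\<Sum>\<^sub>\<infinity>g\<in>G. integral {0..<\<tau>} (\<lambda>t. (cmod (cinner x (exp_op t (adjoint_op A) g)))\<^sup>2)) \<and>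
      (\<Sum>\<^sub>\<infinity>g\<in>G. integral {0..<\<tau>} (\<lambda>t. (cmod (cinner x (exp_op t (adjoint_op A) g)))\<^sup>2)) \<le> c2 * (norm x)\<^sup>2)"

definition admissible_times :: "real \<Rightarrow> real list \<Rightarrow> bool" where
  "admissible_times \<tau> ts \<longleftrightarrow> ts \<noteq> [] \<and> sorted_wrt (<) ts \<and> hd ts = 0 \<and> last ts \<le> \<tau>"

definition mesh_less :: "real \<Rightarrow> real \<Rightarrow> real list \<Rightarrow> bool" where
  "mesh_less \<tau> \<delta> ts \<longleftrightarrow> (\<forall>i<length ts. \<bar>(ts @ [\<tau>]) ! (i + 1) - ts ! i\<bar> < \<delta>)"

end

theory Submission
  imports Defs
begin

text \<open>For fixed \<open>x\<close> the sums \<open>\<Sum>\<^sub>g |\<langle>x, e\<^sup>t\<^sup>A\<^sup>* g\<rangle>|\<^sup>2\<close> over finite parts of the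
  Bessel system \<open>G\<close> are bounded by a multiple of \<open>\<parallel>x\<parallel>\<^sup>2\<close> uniformly in \<open>t \<in> [0, \<tau>]\<close>,
  so all upper frame bounds are automatic. Since \<open>t \<mapsto> e\<^sup>t\<^sup>A\<^sup>*\<close> is Lipschitz, moving \<open>t\<close>
  by \<open>d\<close> changes these sums at most by a factor \<open>2\<close> plus an error \<open>O(d\<^sup>2 \<parallel>x\<parallel>\<^sup>2)\<close>.
  Comparing each \<open>t\<close> with a nearby sample and integrating over \<open>[0, \<tau>]\<close> turns a lower
  bound for the continuous frame into one for every sufficiently fine sampling; comparing
  each sample with a short window of times and integrating over the window turns a lower
  bound for one sampling into one for the continuous frame. In both cases the error term
  is absorbed by choosing the mesh, respectively the window, small.\<close>

subclass (in chilbert) banach ..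

lemma scaleC_zero_left [simp]: "scaleC 0 (x::'a::chilbert) = 0"
proof -
  have "scaleC 0 x = scaleC 0 x + scaleC 0 x" by (metis add_0 scaleC_add_left)
  then show ?thesis by simp
qed

lemma scaleC_zero_right [simp]: "scaleC c (0::'a::chilbert) = 0"
proof -
  have "scaleC c (0::'a) = scaleC c 0 + scaleC c 0" by (metis add_0 scaleC_add_right)
  then show ?thesis by simp
qed

lemma scaleC_minus_right: "scaleC c (- x::'a::chilbert) = - scaleC c x"
proof -
  have "scaleC c (- x) + scaleC c x = 0" by (simp add: scaleC_add_right[symmetric])
  then show ?thesis by (simp add: eq_neg_iff_add_eq_0)
qed

lemma scaleC_diff_right: "scaleC c (x - y::'a::chilbert) = scaleC c x - scaleC c y"
  unfolding diff_conv_add_uminus by (simp only: scaleC_add_right scaleC_minus_right)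

lemma scaleC_scaleR_commute: "scaleC c (r *\<^sub>R x) = r *\<^sub>R scaleC c (x::'a::chilbert)"
  by (simp add: scaleR_scaleC scaleC_scaleC mult.commute)

lemma cinner_zero_left [simp]: "cinner (0::'a::chilbert) y = 0"
proof -
  have "cinner (0::'a) y = cinner 0 y + cinner 0 y" by (metis add_0 cinner_add_left)
  then show ?thesis by simp
qed

lemma cinner_zero_right [simp]: "cinner (x::'a::chilbert) 0 = 0"
  by (subst cinner_commute) simp

lemma cinner_add_right: "cinner (x::'a::chilbert) (y + z) = cinner x y + cinner x z"
  by (subst (1 2 3) cinner_commute) (simp add: cinner_add_left)

lemma cinner_scaleC_right: "cinner (x::'a::chilbert) (scaleC a y) = cnj a * cinner x y"
  by (subst (1 2) cinner_commute) (simp add: cinner_scaleC_left)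

lemma cinner_minus_left: "cinner (- x::'a::chilbert) y = - cinner x y"
proof -
  have "cinner (- x) y + cinner x y = 0" by (simp add: cinner_add_left[symmetric])
  then show ?thesis by (simp add: eq_neg_iff_add_eq_0)
qed

lemma cinner_minus_right: "cinner (x::'a::chilbert) (- y) = - cinner x y"
proof -
  have "cinner x (- y) + cinner x y = 0" by (simp add: cinner_add_right[symmetric])
  then show ?thesis by (simp add: eq_neg_iff_add_eq_0)
qed

lemma cinner_diff_left: "cinner (x - y::'a::chilbert) z = cinner x z - cinner y z"
  unfolding diff_conv_add_uminus by (simp only: cinner_add_left cinner_minus_left)

lemma cinner_diff_right: "cinner (x::'a::chilbert) (y - z) = cinner x y - cinner x z"
  unfolding diff_conv_add_uminus by (simp only: cinner_add_right cinner_minus_right)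

lemma cinner_sum_right: "cinner (x::'a::chilbert) (\<Sum>i\<in>F. f i) = (\<Sum>i\<in>F. cinner x (f i))"
  by (induction F rule: infinite_finite_induct) (auto simp: cinner_add_right)

lemma cinner_scaleR_right: "cinner (x::'a::chilbert) (r *\<^sub>R y) = complex_of_real r * cinner x y"
  by (simp add: scaleR_scaleC cinner_scaleC_right)

lemma cinner_self: "cinner (x::'a::chilbert) x = complex_of_real ((norm x)\<^sup>2)"
proof -
  have "Im (cinner x x) = Im (cnj (cinner x x))" by (subst cinner_commute) simp
  then have "Im (cinner x x) = 0" by simp
  moreover have "Re (cinner x x) \<ge> 0"
    using norm_eq_sqrt_cinner[of x] by (metis norm_ge_zero not_le real_sqrt_lt_0_iff)
  ultimately show ?thesis by (simp add: complex_eq_iff norm_eq_sqrt_cinner)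
qed

lemma cinner_self_Re: "Re (cinner (x::'a::chilbert) x) = (norm x)\<^sup>2"
  by (simp add: cinner_self)

lemma cinner_self_eq_0: "cinner (x::'a::chilbert) x = 0 \<longleftrightarrow> x = 0"
  by (simp add: cinner_self)

lemma cinner_ext: "(\<And>x. cinner x u = cinner x v) \<Longrightarrow> u = (v::'a::chilbert)"
  by (metis cinner_diff_right cinner_self_eq_0 eq_iff_diff_eq_0)

lemma norm_scaleC: "norm (scaleC c (x::'a::chilbert)) = cmod c * norm x"
proof -
  have "cinner (scaleC c x) (scaleC c x) = (c * cnj c) * cinner x x"
    by (simp add: cinner_scaleC_left cinner_scaleC_right mult.assoc)
  then have "complex_of_real ((norm (scaleC c x))\<^sup>2) = c * cnj c * complex_of_real ((norm x)\<^sup>2)"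
    by (simp add: cinner_self)
  then have "(norm (scaleC c x))\<^sup>2 = (cmod c * norm x)\<^sup>2"
    by (simp add: complex_norm_square[symmetric] power_mult_distrib
        of_real_mult[symmetric] del: of_real_mult of_real_power)
  then show ?thesis by (rule power2_eq_imp_eq) auto
qed

lemma norm_add_sq: "(norm (x + y::'a::chilbert))\<^sup>2 = (norm x)\<^sup>2 + (norm y)\<^sup>2 + 2 * Re (cinner x y)"
proof -
  have "Re (cinner y x) = Re (cinner x y)" by (subst cinner_commute) simp
  then show ?thesis
    by (simp add: cinner_self_Re[symmetric] cinner_add_left cinner_add_right)
qed

lemma norm_diff_sq: "(norm (x - y::'a::chilbert))\<^sup>2 = (norm x)\<^sup>2 + (norm y)\<^sup>2 - 2 * Re (cinner x y)"
proof -
  have "Re (cinner y x) = Re (cinner x y)" by (subst cinner_commute) simp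
  then show ?thesis
    by (simp add: cinner_self_Re[symmetric] cinner_diff_left cinner_diff_right)
qed

text \<open>Expand the square norm of the residual \<open>x - l y\<close> of the orthogonal projection
  of \<open>x\<close> onto \<open>y\<close>.\<close>

lemma cinner_Cauchy_Schwarz: "cmod (cinner (x::'a::chilbert) y) \<le> norm x * norm y"
proof (cases "y = 0")
  case True then show ?thesis by simp
next
  case False
  define c where "c = cinner x y"
  define n where "n = (norm y)\<^sup>2"
  have n: "n > 0" using False by (simp add: n_def)
  have n0: "complex_of_real n \<noteq> 0" using n by simp
  have cc: "c * cnj c = complex_of_real ((cmod c)\<^sup>2)" by (rule complex_norm_square[symmetric])
  define l where "l = c / complex_of_real n"
  have yx: "cinner y x = cnj c" by (simp add: c_def cinner_commute[of y x])
  have yy: "cinner y y = complex_of_real n" by (simp add: n_def cinner_self)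
  have "cinner (x - scaleC l y) (x - scaleC l y)
      = cinner x x - cnj l * c - l * cnj c + l * cnj l * complex_of_real n"
    by (simp add: cinner_diff_left cinner_diff_right cinner_scaleC_left
        cinner_scaleC_right yx yy c_def algebra_simps)
  also have "\<dots> = complex_of_real ((norm x)\<^sup>2 - (cmod c)\<^sup>2 / n)"
    unfolding l_def using n0 cc by (simp add: cinner_self field_simps power2_eq_square)
  finally have "complex_of_real ((norm (x - scaleC l y))\<^sup>2) = complex_of_real ((norm x)\<^sup>2 - (cmod c)\<^sup>2 / n)"
    by (simp add: cinner_self)
  then have "(cmod c)\<^sup>2 / n \<le> (norm x)\<^sup>2"
    by (metis diff_ge_0_iff_ge of_real_eq_iff zero_le_power2)
  then have "(cmod c)\<^sup>2 \<le> (norm x * norm y)\<^sup>2"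
    using n by (simp add: n_def field_simps power_mult_distrib)
  then show ?thesis unfolding c_def by (rule power2_le_imp_le) auto
qed

lemma Cauchy_of_norm_diff_sq_le:
  fixes xs :: "nat \<Rightarrow> 'a::real_normed_vector"
  assumes close: "\<And>m n. (norm (xs m - xs n))\<^sup>2 \<le> 4 * (1 / Suc m + 1 / Suc n)"
  shows "Cauchy xs"
proof (rule metric_CauchyI)
  fix e :: real assume e: "e > 0"
  obtain N :: nat where N: "8 / e\<^sup>2 < N" using reals_Archimedean2 by blast
  have "dist (xs m) (xs n) < e" if "m \<ge> N" "n \<ge> N" for m n
  proof -
    have e2: "e\<^sup>2 > 0" using e by simp
    have "1 / real (Suc m) \<le> 1 / Suc N" using that by (simp add: frac_le)
    moreover have "1 / real (Suc n) \<le> 1 / Suc N" using that by (simp add: frac_le)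
    moreover have "8 / Suc N < e\<^sup>2"
    proof -
      have "8 < real N * e\<^sup>2" using N e2 by (simp add: field_simps)
      also have "\<dots> \<le> real (Suc N) * e\<^sup>2" using e2 by (intro mult_right_mono) auto
      finally show ?thesis by (simp add: divide_less_eq mult.commute)
    qed
    ultimately have "(norm (xs m - xs n))\<^sup>2 < e\<^sup>2" using close[of m n] by simp
    then have "norm (xs m - xs n) < e" using e power_less_imp_less_base by fastforce
    then show ?thesis unfolding dist_norm .
  qed
  then show "\<exists>M. \<forall>m\<ge>M. \<forall>n\<ge>M. dist (xs m) (xs n) < e" by blast
qed

text \<open>The energy \<open>\<parallel>x\<parallel>\<^sup>2/2 - f x\<close> attains its infimum: by the parallelogram law any
  minimising sequence is Cauchy.\<close>

lemma exists_minimizer_energy: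
  fixes f :: "'a::chilbert \<Rightarrow> real"
  assumes f: "bounded_linear f"
  shows "\<exists>z. \<forall>x. (norm z)\<^sup>2 / 2 - f z \<le> (norm x)\<^sup>2 / 2 - f x"
proof -
  define J where "J x = (norm x)\<^sup>2 / 2 - f x" for x
  obtain K where K: "\<And>x. f x \<le> K * norm x"
    using bounded_linear.pos_bounded[OF f] by (metis abs_le_D1 mult.commute real_norm_def)
  have "J x \<ge> - (K\<^sup>2) / 2" for x
  proof -
    have "0 \<le> (norm x - K)\<^sup>2" by simp
    then show ?thesis unfolding J_def using K[of x] by (simp add: power2_diff algebra_simps)
  qed
  then have bdd: "bdd_below (range J)" by (intro bdd_belowI[of _ "- (K\<^sup>2) / 2"]) auto
  define I where "I = Inf (range J)"
  have IJ: "I \<le> J x" for x unfolding I_def using bdd by (simp add: cInf_lower)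
  have "\<exists>x. J x < I + 1 / Suc n" for n
    using cInf_lessD[of "range J" "I + 1 / Suc n"] unfolding I_def by auto
  then obtain xs where xs: "\<And>n. J (xs n) < I + 1 / Suc n" by metis
  have par: "J x + J y = 2 * J ((1/2) *\<^sub>R (x + y)) + (norm (x - y))\<^sup>2 / 4" for x y
  proof -
    have "f x + f y = 2 * f ((1/2) *\<^sub>R (x + y))"
      by (simp add: linear_add[OF bounded_linear.linear[OF f]] linear_scale[OF bounded_linear.linear[OF f]])
    moreover have "(norm ((1/2) *\<^sub>R (x + y)))\<^sup>2 = (norm (x + y))\<^sup>2 / 4"
      by (simp add: power2_eq_square)
    ultimately show ?thesis unfolding J_def using norm_add_sq[of x y] norm_diff_sq[of x y]
      by (simp add: field_simps)
  qed
  have "(norm (xs m - xs n))\<^sup>2 \<le> 4 * (1 / Suc m + 1 / Suc n)" for m n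
  proof -
    have "(norm (xs m - xs n))\<^sup>2 / 4 < 1 / Suc m + 1 / Suc n"
      using par[of "xs m" "xs n"] IJ[of "(1/2) *\<^sub>R (xs m + xs n)"] xs[of m] xs[of n] by linarith
    then show ?thesis by simp
  qed
  then obtain z where z: "xs \<longlonglongrightarrow> z"
    using Cauchy_of_norm_diff_sq_le Cauchy_convergent_iff convergent_def by blast
  have "(\<lambda>n. J (xs n)) \<longlonglongrightarrow> J z"
    unfolding J_def by (intro tendsto_intros bounded_linear.tendsto[OF f] z) simp
  moreover have "(\<lambda>n. J (xs n)) \<longlonglongrightarrow> I"
  proof (rule tendsto_sandwich[of "\<lambda>n. I" _ _ "\<lambda>n. I + 1 / Suc n"])
    show "(\<lambda>n. I + 1 / real (Suc n)) \<longlonglongrightarrow> I"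
      using tendsto_add[OF tendsto_const[of I] LIMSEQ_inverse_real_of_nat] by (simp add: inverse_eq_divide)
  qed (use IJ xs in \<open>auto simp: less_imp_le\<close>)
  ultimately have "J z = I" by (rule LIMSEQ_unique)
  then show ?thesis using IJ unfolding J_def by metis
qed

text \<open>At the minimiser \<open>z\<close> the first variation in every direction \<open>h\<close> vanishes,
  which is exactly \<open>f h = Re \<langle>z, h\<rangle>\<close>.\<close>

lemma riesz_representation_Re:
  fixes f :: "'a::chilbert \<Rightarrow> real"
  assumes f: "bounded_linear f"
  shows "\<exists>z. \<forall>h. f h = Re (cinner z h)"
proof -
  obtain z where z: "\<And>x. (norm z)\<^sup>2 / 2 - f z \<le> (norm x)\<^sup>2 / 2 - f x"
    using exists_minimizer_energy[OF f] by blast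
  have lin: "f (z + t *\<^sub>R h) = f z + t * f h" for t h
    using linear_add[OF bounded_linear.linear[OF f]] linear_scale[OF bounded_linear.linear[OF f]] by simp
  show ?thesis
  proof (intro exI allI)
    fix h
    define a where "a = Re (cinner z h) - f h"
    define b where "b = (norm h)\<^sup>2 / 2"
    have b: "b \<ge> 0" unfolding b_def by simp
    have t: "t * a + t\<^sup>2 * b \<ge> 0" for t
    proof -
      have "(norm (z + t *\<^sub>R h))\<^sup>2 = (norm z)\<^sup>2 + t\<^sup>2 * (norm h)\<^sup>2 + 2 * t * Re (cinner z h)"
        using norm_add_sq[of z "t *\<^sub>R h"] by (simp add: cinner_scaleR_right power_mult_distrib)
      then show ?thesis using z[of "z + t *\<^sub>R h"] lin[of t h] unfolding a_def b_def
        by (simp add: algebra_simps)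
    qed
    \<comment> \<open>evaluating the nonnegative quadratic at \<open>t = -a / (2 b + 1)\<close> forces \<open>a = 0\<close>\<close>
    define D where "D = 2 * b + 1"
    have D: "D > 0" unfolding D_def using b by simp
    define t where "t = - a / D"
    have Dt: "D * t = - a" unfolding t_def using D by simp
    have "D\<^sup>2 * (t * a + t\<^sup>2 * b) = (D * t) * D * a + (D * t)\<^sup>2 * b"
      by (simp add: algebra_simps power2_eq_square)
    also have "\<dots> = (- a) * D * a + (- a)\<^sup>2 * b" by (simp only: Dt)
    also have "\<dots> = - (a\<^sup>2 * (b + 1))" unfolding D_def by (simp add: algebra_simps power2_eq_square)
    finally have "a\<^sup>2 * (b + 1) \<le> 0" using t[of t]
      by (metis neg_0_le_iff_le zero_le_mult_iff zero_le_power2)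
    then have "a = 0" using b by (simp add: mult_le_0_iff)
    then show "f h = Re (cinner z h)" unfolding a_def by simp
  qed
qed

lemma riesz_representation:
  fixes \<phi> :: "'a::chilbert \<Rightarrow> complex"
  assumes add: "\<And>x y. \<phi> (x + y) = \<phi> x + \<phi> y"
    and scale: "\<And>c x. \<phi> (scaleC c x) = c * \<phi> x"
    and bound: "\<And>x. cmod (\<phi> x) \<le> K * norm x"
  shows "\<exists>z. \<forall>x. \<phi> x = cinner x z"
proof -
  have "bounded_linear (\<lambda>x. Re (\<phi> x))"
  proof (rule bounded_linear_intro[of _ K])
    show "Re (\<phi> (x + y)) = Re (\<phi> x) + Re (\<phi> y)" for x y by (simp add: add)
    show "Re (\<phi> (r *\<^sub>R x)) = r *\<^sub>R Re (\<phi> x)" for r x by (simp add: scaleR_scaleC scale)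
    show "norm (Re (\<phi> x)) \<le> norm x * K" for x
      using bound[of x] abs_Re_le_cmod[of "\<phi> x"] by (simp add: mult.commute)
  qed
  then obtain z where z: "\<And>h. Re (\<phi> h) = Re (cinner z h)"
    using riesz_representation_Re by blast
  have zr: "Re (\<phi> h) = Re (cinner h z)" for h
    using z[of h] by (subst cinner_commute) simp
  show ?thesis
  proof (intro exI allI)
    fix x
    have "Im (\<phi> x) = Re (\<phi> (scaleC (- \<i>) x))" by (simp add: scale)
    also have "\<dots> = Im (cinner x z)" by (simp add: zr cinner_scaleC_left)
    finally show "\<phi> x = cinner x z" using zr[of x] by (simp add: complex_eq_iff)
  qed
qed

lemma cinner_adjoint_op:
  fixes A :: "'a::chilbert \<Rightarrow> 'a"
  assumes "bounded_clinear_op A"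
  shows "cinner (A x) y = cinner x (adjoint_op A y)"
proof -
  obtain K where K: "\<And>x. norm (A x) \<le> K * norm x"
    and add: "\<And>x y. A (x + y) = A x + A y" and scale: "\<And>c x. A (scaleC c x) = scaleC c (A x)"
    using assms unfolding bounded_clinear_op_def by blast
  have "\<exists>z. \<forall>x. cinner (A x) y = cinner x z" for y
  proof (rule riesz_representation[of _ "K * norm y"])
    show "cmod (cinner (A x) y) \<le> K * norm y * norm x" for x
      using cinner_Cauchy_Schwarz[of "A x" y] K[of x]
      by (smt (verit, ccfv_SIG) mult.commute mult.left_commute mult_right_mono norm_ge_zero)
  qed (simp_all add: add scale cinner_add_left cinner_scaleC_left)
  then have "\<exists>B. \<forall>x y. cinner (A x) y = cinner x (B y)" by metis
  then have "\<forall>x y. cinner (A x) y = cinner x (adjoint_op A y)"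
    unfolding adjoint_op_def by (rule someI_ex)
  then show ?thesis by blast
qed

lemma bounded_clinear_op_bound_nonneg:
  assumes "bounded_clinear_op A"
  obtains K where "K \<ge> 0" "\<And>x. norm (A x) \<le> K * norm x"
proof -
  obtain K0 where "\<And>x. norm (A x) \<le> K0 * norm x"
    using assms unfolding bounded_clinear_op_def by blast
  then have "\<And>x. norm (A x) \<le> \<bar>K0\<bar> * norm x"
    by (meson abs_ge_self mult_right_mono norm_ge_zero order_trans)
  then show ?thesis by (rule that[rotated]) simp
qed

lemma bounded_clinear_op_adjoint:
  fixes A :: "'a::chilbert \<Rightarrow> 'a"
  assumes A: "bounded_clinear_op A"
  shows "bounded_clinear_op (adjoint_op A)"
proof -
  define B where "B = adjoint_op A"
  have adj: "\<And>x y. cinner (A x) y = cinner x (B y)" using cinner_adjoint_op[OF A] B_def by simp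
  obtain K where K0: "K \<ge> 0" and K: "\<And>x. norm (A x) \<le> K * norm x"
    using bounded_clinear_op_bound_nonneg[OF A] by blast
  have "B (x + y) = B x + B y" for x y
    by (rule cinner_ext) (simp add: adj[symmetric] cinner_add_right)
  moreover have "B (scaleC c x) = scaleC c (B x)" for c x
    by (rule cinner_ext) (simp add: adj[symmetric] cinner_scaleC_right)
  moreover have "norm (B y) \<le> K * norm y" for y
  proof -
    have "(norm (B y))\<^sup>2 = Re (cinner (A (B y)) y)" by (simp add: adj cinner_self_Re)
    also have "\<dots> \<le> norm (A (B y)) * norm y"
      using complex_Re_le_cmod cinner_Cauchy_Schwarz order_trans by blast
    also have "\<dots> \<le> K * norm (B y) * norm y" using K by (simp add: mult_right_mono)
    finally have "norm (B y) * norm (B y) \<le> (K * norm y) * norm (B y)"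
      by (simp add: power2_eq_square algebra_simps)
    then show ?thesis
      by (cases "norm (B y) = 0") (auto simp: mult_le_cancel_right K0)
  qed
  ultimately show ?thesis unfolding B_def[symmetric] bounded_clinear_op_def by blast
qed

lemma exp_sums_real: "(\<lambda>n. x ^ n / fact n) sums exp (x::real)"
  using exp_converges[of x] by (simp add: divide_inverse mult.commute)

locale bounded_clinear_operator =
  fixes B :: "'a::chilbert \<Rightarrow> 'a" and K :: real
  assumes add: "\<And>x y. B (x + y) = B x + B y"
    and scaleC: "\<And>c x. B (scaleC c x) = scaleC c (B x)"
    and norm_le: "\<And>x. norm (B x) \<le> K * norm x"
    and K_nonneg: "K \<ge> 0"
begin

lemma pow_add: "(B ^^ n) (x + y) = (B ^^ n) x + (B ^^ n) y"
  by (induction n) (auto simp: add)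

lemma pow_scaleC: "(B ^^ n) (scaleC c x) = scaleC c ((B ^^ n) x)"
  by (induction n) (auto simp: scaleC)

lemma norm_pow_le: "norm ((B ^^ n) x) \<le> K ^ n * norm x"
proof (induction n)
  case (Suc n)
  have "norm ((B ^^ Suc n) x) \<le> K * norm ((B ^^ n) x)" using norm_le by simp
  also have "\<dots> \<le> K * (K ^ n * norm x)" using Suc K_nonneg by (simp add: mult_left_mono)
  finally show ?case by simp
qed simp

lemma norm_exp_term_le: "norm ((t ^ n / fact n) *\<^sub>R (B ^^ n) v) \<le> (\<bar>t\<bar> * K) ^ n / fact n * norm v"
proof -
  have "norm ((t ^ n / fact n) *\<^sub>R (B ^^ n) v) = \<bar>t\<bar> ^ n / fact n * norm ((B ^^ n) v)"
    by (simp add: power_abs)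
  also have "\<dots> \<le> \<bar>t\<bar> ^ n / fact n * (K ^ n * norm v)"
    by (intro mult_left_mono norm_pow_le) auto
  finally show ?thesis by (simp add: power_mult_distrib)
qed

lemma summable_exp_majorant: "summable (\<lambda>n. (\<bar>t\<bar> * K) ^ n / fact n * norm v)"
  using summable_mult2[OF sums_summable[OF exp_sums_real]] by blast

lemma summable_exp_terms: "summable (\<lambda>n. (t ^ n / fact n) *\<^sub>R (B ^^ n) v)"
  by (rule summable_comparison_test'[where N=0, OF summable_exp_majorant[of t v]])
     (rule norm_exp_term_le)

lemma norm_exp_op_le: "norm (exp_op t B v) \<le> exp (\<bar>t\<bar> * K) * norm v"
proof -
  have "norm (exp_op t B v) \<le> (\<Sum>n. (\<bar>t\<bar> * K) ^ n / fact n * norm v)"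
    unfolding exp_op_def by (rule norm_suminf_le) (rule norm_exp_term_le, rule summable_exp_majorant)
  also have "\<dots> = exp (\<bar>t\<bar> * K) * norm v"
    by (rule sums_unique[symmetric]) (rule sums_mult2[OF exp_sums_real])
  finally show ?thesis .
qed

lemma exp_op_add: "exp_op t B (x + y) = exp_op t B x + exp_op t B y"
  unfolding exp_op_def
  by (simp add: pow_add scaleR_add_right suminf_add[OF summable_exp_terms summable_exp_terms])

lemma exp_op_scaleC: "exp_op t B (scaleC c x) = scaleC c (exp_op t B x)"
proof -
  have "bounded_linear (scaleC c :: 'a \<Rightarrow> 'a)"
    by (rule bounded_linear_intro[of _ "cmod c"])
       (auto simp: scaleC_add_right scaleC_scaleR_commute norm_scaleC)
  then show ?thesis unfolding exp_op_def
    by (simp add: pow_scaleC scaleC_scaleR_commute[symmetric] bounded_linear.suminf summable_exp_terms)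
qed

text \<open>Termwise from \<open>|t\<^sup>n - s\<^sup>n| \<le> n R\<^sup>n\<^sup>-\<^sup>1 |t - s|\<close> and the crude bound \<open>n \<le> 2\<^sup>n\<close>.\<close>

lemma norm_exp_op_diff_le:
  assumes R: "R > 0" and t: "\<bar>t\<bar> \<le> R" and s: "\<bar>s\<bar> \<le> R"
  shows "norm (exp_op t B v - exp_op s B v) \<le> \<bar>t - s\<bar> * (exp (2 * R * K) / R) * norm v"
proof -
  have power_diff: "\<bar>t ^ n - s ^ n\<bar> \<le> n * R ^ n * (\<bar>t - s\<bar> / R)" for n
  proof -
    have "norm ((t/R) ^ n - (s/R) ^ n) \<le> n * norm (t/R - s/R)"
      by (rule norm_power_diff) (use R t s in \<open>auto simp: abs_le_iff field_simps\<close>)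
    then have "\<bar>t ^ n - s ^ n\<bar> / R ^ n \<le> n * (\<bar>t - s\<bar> / R)"
      using R by (simp add: power_divide diff_divide_distrib[symmetric] abs_divide)
    then show ?thesis using R by (simp add: field_simps)
  qed
  define g where "g n = \<bar>t - s\<bar> * norm v / R * ((2 * R * K) ^ n / fact n)" for n
  have "g sums (\<bar>t - s\<bar> * norm v / R * exp (2 * R * K))"
    unfolding g_def by (rule sums_mult) (rule exp_sums_real)
  then have g: "summable g" "suminf g = \<bar>t - s\<bar> * (exp (2 * R * K) / R) * norm v"
    by (auto simp: sums_iff field_simps)
  have "exp_op t B v - exp_op s B v
      = (\<Sum>n. (t ^ n / fact n) *\<^sub>R (B ^^ n) v - (s ^ n / fact n) *\<^sub>R (B ^^ n) v)"
    unfolding exp_op_def using suminf_diff[OF summable_exp_terms summable_exp_terms] by simp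
  also have "norm \<dots> \<le> suminf g"
  proof (rule norm_suminf_le[OF _ g(1)])
    fix n
    have "norm ((t ^ n / fact n) *\<^sub>R (B ^^ n) v - (s ^ n / fact n) *\<^sub>R (B ^^ n) v)
        = \<bar>t ^ n - s ^ n\<bar> / fact n * norm ((B ^^ n) v)"
      by (simp add: scaleR_diff_left[symmetric] diff_divide_distrib[symmetric] abs_divide)
    also have "\<dots> \<le> (n * R ^ n * (\<bar>t - s\<bar> / R)) / fact n * (K ^ n * norm v)"
      using R by (intro mult_mono divide_right_mono power_diff norm_pow_le)
        (auto intro!: divide_nonneg_nonneg mult_nonneg_nonneg)
    also have "\<dots> \<le> (2 ^ n * R ^ n * (\<bar>t - s\<bar> / R)) / fact n * (K ^ n * norm v)"
    proof -
      have "real n \<le> 2 ^ n"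
        using less_exp[of n] by (metis of_nat_le_iff of_nat_numeral of_nat_power less_imp_le)
      then show ?thesis using R K_nonneg by (intro mult_right_mono divide_right_mono) auto
    qed
    also have "\<dots> = g n" unfolding g_def by (simp add: power_mult_distrib field_simps)
    finally show "norm ((t ^ n / fact n) *\<^sub>R (B ^^ n) v - (s ^ n / fact n) *\<^sub>R (B ^^ n) v) \<le> g n" .
  qed
  finally show ?thesis using g(2) by simp
qed

end

lemma bounded_clinear_operator_adjoint:
  assumes "bounded_clinear_op A"
  obtains K where "bounded_clinear_operator (adjoint_op A) K"
proof -
  have B: "bounded_clinear_op (adjoint_op A)" by (rule bounded_clinear_op_adjoint[OF assms])
  then obtain K where "K \<ge> 0" "\<And>x. norm (adjoint_op A x) \<le> K * norm x"
    using bounded_clinear_op_bound_nonneg by blast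
  with B show ?thesis
    using that unfolding bounded_clinear_operator_def bounded_clinear_op_def by blast
qed

lemma square_sum_le_sum_squares:
  fixes u v :: "'i \<Rightarrow> real"
  assumes "\<And>i. u i \<ge> 0" "\<And>i. v i \<ge> 0"
  shows "(\<Sum>i\<in>F. u i * v i)\<^sup>2 \<le> (\<Sum>i\<in>F. (u i)\<^sup>2) * (\<Sum>i\<in>F. (v i)\<^sup>2)"
proof -
  have "(\<Sum>i\<in>F. u i * v i)\<^sup>2 \<le> (L2_set u F * L2_set v F)\<^sup>2"
    using L2_set_mult_ineq[of u v F] assms by (simp add: power_mono sum_nonneg)
  also have "\<dots> = (\<Sum>i\<in>F. (u i)\<^sup>2) * (\<Sum>i\<in>F. (v i)\<^sup>2)"
    unfolding L2_set_def power_mult_distrib by (simp add: sum_nonneg)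
  finally show ?thesis .
qed

lemma cancel_square_le:
  fixes S M :: real
  assumes "S * S \<le> M * S" "S \<ge> 0" "M \<ge> 0"
  shows "S \<le> M"
  using assms by (cases "S = 0") (auto simp: mult_le_cancel_right)

lemma norm_synthesis_sq_le:
  fixes a :: "'a::chilbert \<Rightarrow> complex"
  assumes bessel: "\<And>y. (\<Sum>g\<in>F. (cmod (cinner y g))\<^sup>2) \<le> C * (norm y)\<^sup>2" and C: "C \<ge> 0"
  shows "(norm (\<Sum>g\<in>F. scaleC (a g) g))\<^sup>2 \<le> C * (\<Sum>g\<in>F. (cmod (a g))\<^sup>2)"
proof -
  define y where "y = (\<Sum>g\<in>F. scaleC (a g) g)"
  define S where "S = (\<Sum>g\<in>F. (cmod (a g))\<^sup>2)"
  have S0: "S \<ge> 0" unfolding S_def by (simp add: sum_nonneg)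
  have "cinner y y = (\<Sum>g\<in>F. cnj (a g) * cinner y g)"
    by (subst (2) y_def) (simp add: cinner_sum_right cinner_scaleC_right)
  then have "(norm y)\<^sup>2 = Re (\<Sum>g\<in>F. cnj (a g) * cinner y g)" by (metis cinner_self_Re)
  also have "\<dots> \<le> cmod (\<Sum>g\<in>F. cnj (a g) * cinner y g)" by (rule complex_Re_le_cmod)
  also have "\<dots> \<le> (\<Sum>g\<in>F. cmod (a g) * cmod (cinner y g))"
    by (rule order_trans[OF norm_sum]) (simp add: norm_mult)
  finally have "((norm y)\<^sup>2)\<^sup>2 \<le> (\<Sum>g\<in>F. cmod (a g) * cmod (cinner y g))\<^sup>2"
    by (intro power_mono) simp_all
  also have "\<dots> \<le> S * (\<Sum>g\<in>F. (cmod (cinner y g))\<^sup>2)"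
    unfolding S_def by (rule square_sum_le_sum_squares) auto
  also have "\<dots> \<le> S * (C * (norm y)\<^sup>2)" using bessel S0 by (simp add: mult_left_mono)
  finally have "(norm y)\<^sup>2 * (norm y)\<^sup>2 \<le> (C * S) * (norm y)\<^sup>2"
    by (simp add: power2_eq_square algebra_simps)
  then show ?thesis unfolding y_def[symmetric] S_def[symmetric]
    by (rule cancel_square_le) (use S0 C in simp_all)
qed

text \<open>The Bessel bound of \<open>G\<close> transfers to its image under a bounded operator \<open>M\<close>:
  with \<open>y = \<Sum>\<^sub>g \<langle>x, M g\<rangle> g\<close> the partial frame sum \<open>S\<close> equals \<open>\<langle>x, M y\<rangle>\<close>, so
  \<open>S \<le> \<parallel>x\<parallel> m \<parallel>y\<parallel>\<close>, while \<open>\<parallel>y\<parallel>\<^sup>2 \<le> C S\<close>.\<close>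

lemma bessel_sum_operator_le:
  fixes M :: "'a::chilbert \<Rightarrow> 'a"
  assumes bessel: "\<And>y. (\<Sum>g\<in>F. (cmod (cinner y g))\<^sup>2) \<le> C * (norm y)\<^sup>2"
    and M_add: "\<And>u v. M (u + v) = M u + M v"
    and M_scaleC: "\<And>c u. M (scaleC c u) = scaleC c (M u)"
    and M_norm: "\<And>u. norm (M u) \<le> m * norm u"
    and C: "C \<ge> 0" and m: "m \<ge> 0"
  shows "(\<Sum>g\<in>F. (cmod (cinner x (M g)))\<^sup>2) \<le> C * m\<^sup>2 * (norm x)\<^sup>2"
proof -
  define a where "a g = cinner x (M g)" for g
  define S where "S = (\<Sum>g\<in>F. (cmod (a g))\<^sup>2)"
  have S0: "S \<ge> 0" unfolding S_def by (simp add: sum_nonneg)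
  define y where "y = (\<Sum>g\<in>F. scaleC (a g) g)"
  have "M 0 = 0" using M_add[of 0 0] by simp
  then have M_sum: "M (\<Sum>g\<in>H. h g) = (\<Sum>g\<in>H. M (h g))" for H h
    by (induction H rule: infinite_finite_induct) (auto simp: M_add)
  have "cinner x (M y) = (\<Sum>g\<in>F. cnj (a g) * a g)"
    unfolding y_def M_sum by (simp add: M_scaleC cinner_sum_right cinner_scaleC_right a_def)
  also have "\<dots> = complex_of_real S"
    unfolding S_def of_real_sum
    by (rule sum.cong) (simp_all add: complex_norm_square[symmetric] mult.commute)
  finally have "S = cmod (cinner x (M y))" using S0 by simp
  also have "\<dots> \<le> norm x * norm (M y)" by (rule cinner_Cauchy_Schwarz)
  also have "\<dots> \<le> norm x * (m * norm y)" by (simp add: M_norm mult_left_mono)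
  finally have "S * S \<le> (norm x * m * norm y) * (norm x * m * norm y)"
    using S0 by (intro mult_mono) (auto simp: mult.assoc)
  also have "\<dots> = (norm x * m)\<^sup>2 * (norm y)\<^sup>2" by (simp add: power2_eq_square algebra_simps)
  also have "\<dots> \<le> (norm x * m)\<^sup>2 * (C * S)"
    using norm_synthesis_sq_le[OF bessel C, of a] unfolding y_def S_def by (simp add: mult_left_mono)
  finally have "S * S \<le> (C * m\<^sup>2 * (norm x)\<^sup>2) * S" by (simp add: power2_eq_square algebra_simps)
  then have "S \<le> C * m\<^sup>2 * (norm x)\<^sup>2"
    by (rule cancel_square_le) (use S0 C in simp_all)
  then show ?thesis unfolding S_def a_def .
qed

lemma power2_norm_le_diff:
  fixes a b :: "'a::real_normed_vector"
  shows "(norm a)\<^sup>2 \<le> 2 * (norm b)\<^sup>2 + 2 * (norm (a - b))\<^sup>2"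
proof -
  have "norm a \<le> norm b + norm (a - b)" by (metis add.commute diff_add_cancel norm_triangle_ineq)
  then have "(norm a)\<^sup>2 \<le> (norm b + norm (a - b))\<^sup>2" by (simp add: power_mono)
  also have "\<dots> \<le> 2 * (norm b)\<^sup>2 + 2 * (norm (a - b))\<^sup>2"
    using zero_le_power2[of "norm b - norm (a - b)"] by (simp add: power2_diff power2_sum)
  finally show ?thesis .
qed

lemma exists_small_param:
  fixes c D b :: real
  assumes "c > 0" "D \<ge> 0" "b > 0"
  shows "\<exists>h>0. h \<le> b \<and> D * h\<^sup>2 \<le> c"
proof (intro exI conjI)
  define h where "h = min (min b 1) (c / (D + 1))"
  show "h > 0" "h \<le> b" unfolding h_def using assms by auto
  have "h\<^sup>2 \<le> h" using \<open>h > 0\<close> unfolding h_def power2_eq_square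
    by (intro mult_left_le_one_le) auto
  also have "\<dots> \<le> c / (D + 1)" unfolding h_def by simp
  finally have "D * h\<^sup>2 \<le> D * (c / (D + 1))" using assms by (intro mult_left_mono) auto
  also have "\<dots> \<le> c" using assms by (simp add: field_simps)
  finally show "D * h\<^sup>2 \<le> c" .
qed

lemma admissible_times_subset:
  assumes "admissible_times \<tau> ts"
  shows "set ts \<subseteq> {0..\<tau>}"
proof
  fix s assume "s \<in> set ts"
  then obtain j where j: "j < length ts" "s = ts ! j" by (metis in_set_conv_nth)
  from assms have "ts \<noteq> []" and sorted: "sorted_wrt (<) ts" and "hd ts = 0" "last ts \<le> \<tau>"
    unfolding admissible_times_def by auto
  moreover have "ts ! 0 \<le> ts ! j"
    using sorted j by (cases "j = 0") (auto simp: sorted_wrt_iff_nth_less less_imp_le)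
  moreover have "ts ! j \<le> ts ! (length ts - 1)"
    using sorted j by (cases "j = length ts - 1") (auto simp: sorted_wrt_iff_nth_less less_imp_le)
  ultimately show "s \<in> {0..\<tau>}" using j by (simp add: hd_conv_nth last_conv_nth)
qed

text \<open>The last sample \<open>ts ! i \<le> t\<close> is followed by a sample \<open>> t\<close> or by the
  endpoint \<open>\<tau>\<close> appended in \<open>mesh_less\<close>; either is less than \<open>\<delta>\<close> away.\<close>

lemma admissible_times_dense:
  assumes adm: "admissible_times \<tau> ts" and mesh: "mesh_less \<tau> \<delta> ts" and t: "t \<in> {0..\<tau>}"
  shows "\<exists>s\<in>set ts. \<bar>t - s\<bar> < \<delta>"
proof -
  from adm have ne: "ts \<noteq> []" and "hd ts = 0"
    unfolding admissible_times_def by auto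
  define S where "S = {i. i < length ts \<and> ts ! i \<le> t}"
  have "0 \<in> S" unfolding S_def using ne \<open>hd ts = 0\<close> t by (simp add: hd_conv_nth)
  define i where "i = Max S"
  have "finite S" unfolding S_def by simp
  then have "i \<in> S" and i_max: "\<And>j. j \<in> S \<Longrightarrow> j \<le> i"
    unfolding i_def using \<open>0 \<in> S\<close> by (auto intro: Max_in)
  then have i: "i < length ts" "ts ! i \<le> t" unfolding S_def by auto
  have gap: "\<bar>(ts @ [\<tau>]) ! (i + 1) - ts ! i\<bar> < \<delta>" using mesh i unfolding mesh_less_def by blast
  have "t - ts ! i < \<delta>"
  proof (cases "i + 1 < length ts")
    case True
    then have "t < ts ! (i + 1)" using i_max[of "i + 1"] unfolding S_def by fastforce
    then show ?thesis using gap True by (simp add: nth_append)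
  next
    case False
    then have "(ts @ [\<tau>]) ! (i + 1) = \<tau>" using i by (simp add: nth_append)
    then show ?thesis using gap t by auto
  qed
  then show ?thesis using i by (metis abs_of_nonneg diff_ge_0_iff_ge nth_mem)
qed

lemma admissible_times_uniform:
  assumes "\<tau> > 0" "N > 0"
  shows "admissible_times \<tau> (map (\<lambda>k. \<tau> * real k / real N) [0..<N])"
  unfolding admissible_times_def
proof (intro conjI)
  show "sorted_wrt (<) (map (\<lambda>k. \<tau> * real k / real N) [0..<N])" unfolding sorted_wrt_map
    by (rule sorted_wrt_mono_rel[OF _ sorted_wrt_upt])
       (use assms in \<open>auto simp: divide_strict_right_mono\<close>)
qed (use assms in \<open>simp_all add: hd_map last_map field_simps\<close>)

lemma mesh_less_uniform:
  assumes "\<tau> > 0" "N > 0" "\<tau> / N < \<delta>"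
  shows "mesh_less \<tau> \<delta> (map (\<lambda>k. \<tau> * real k / real N) [0..<N])"
  unfolding mesh_less_def
proof (intro allI impI)
  define ts where "ts = map (\<lambda>k. \<tau> * real k / real N) [0..<N]"
  fix i assume "i < length (map (\<lambda>k. \<tau> * real k / real N) [0..<N])"
  then have i: "i < N" by simp
  have "(ts @ [\<tau>]) ! (i + 1) - ts ! i = \<tau> / N"
  proof (cases "i + 1 < N")
    case True
    then show ?thesis using i by (simp add: ts_def nth_append field_simps)
  next
    case False
    then have "i + 1 = N" using i by simp
    then have "(ts @ [\<tau>]) ! (i + 1) = \<tau>" and "real N = real i + 1"
      by (auto simp: ts_def nth_append)
    then show ?thesis using i assms by (simp add: ts_def field_simps)
  qed
  then show "\<bar>(ts @ [\<tau>]) ! (i + 1) - ts ! i\<bar> < \<delta>" using assms by simp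
qed

lemma exists_admissible_times:
  assumes \<tau>: "\<tau> > 0" and \<delta>: "\<delta> > 0"
  shows "\<exists>ts. admissible_times \<tau> ts \<and> mesh_less \<tau> \<delta> ts"
proof -
  obtain N :: nat where N: "\<tau> / \<delta> < N" using reals_Archimedean2 by blast
  then have "N > 0" using \<tau> \<delta> by (metis divide_pos_pos of_nat_0 of_nat_0_less_iff order_less_trans)
  moreover have "\<tau> / N < \<delta>" using N \<open>N > 0\<close> \<delta> by (simp add: field_simps)
  ultimately show ?thesis using admissible_times_uniform mesh_less_uniform \<tau> by blast
qed

locale exp_frame_setting = bounded_clinear_operator B K for B :: "'a::chilbert \<Rightarrow> 'a" and K +
  fixes G :: "'a set" and C \<tau> :: real
  assumes bessel_sum_le: "\<And>y F. finite F \<Longrightarrow> F \<subseteq> G \<Longrightarrow> (\<Sum>g\<in>F. (cmod (cinner y g))\<^sup>2) \<le> C * (norm y)\<^sup>2"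
    and C_nonneg: "C \<ge> 0" and tau_pos: "\<tau> > 0"
begin

definition lip :: real where "lip = exp (2 * \<tau> * K) / \<tau>"

definition coeff_sq :: "'a \<Rightarrow> real \<Rightarrow> 'a \<Rightarrow> real" where
  "coeff_sq x t g = (cmod (cinner x (exp_op t B g)))\<^sup>2"

definition cont_energy :: "'a \<Rightarrow> real" where
  "cont_energy x = (\<Sum>\<^sub>\<infinity>g\<in>G. integral {0..\<tau>} (\<lambda>t. coeff_sq x t g))"

definition disc_energy :: "real set \<Rightarrow> 'a \<Rightarrow> real" where
  "disc_energy S x = (\<Sum>\<^sub>\<infinity>(g, s)\<in>G \<times> S. coeff_sq x s g)"

lemma lip_pos: "lip > 0"
  unfolding lip_def using tau_pos by simp

lemma coeff_sq_nonneg: "coeff_sq x t g \<ge> 0"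
  unfolding coeff_sq_def by simp

lemma sum_coeff_sq_le:
  assumes "t \<in> {0..\<tau>}" "finite F" "F \<subseteq> G"
  shows "(\<Sum>g\<in>F. coeff_sq x t g) \<le> C * (exp (\<tau> * K))\<^sup>2 * (norm x)\<^sup>2"
proof -
  have "(\<Sum>g\<in>F. coeff_sq x t g) \<le> C * (exp (\<bar>t\<bar> * K))\<^sup>2 * (norm x)\<^sup>2"
    unfolding coeff_sq_def
  proof (rule bessel_sum_operator_le)
    show "norm (exp_op t B u) \<le> exp (\<bar>t\<bar> * K) * norm u" for u by (rule norm_exp_op_le)
  qed (use assms C_nonneg bessel_sum_le in \<open>auto simp: exp_op_add exp_op_scaleC\<close>)
  also have "\<dots> \<le> C * (exp (\<tau> * K))\<^sup>2 * (norm x)\<^sup>2"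
    using assms K_nonneg C_nonneg
    by (intro mult_right_mono mult_left_mono power_mono) (auto intro: mult_right_mono)
  finally show ?thesis .
qed

lemma sum_coeff_sq_shift_le:
  assumes "t \<in> {0..\<tau>}" "s \<in> {0..\<tau>}" "finite F" "F \<subseteq> G"
  shows "(\<Sum>g\<in>F. coeff_sq x t g)
    \<le> 2 * (\<Sum>g\<in>F. coeff_sq x s g) + 2 * C * (\<bar>t - s\<bar> * lip)\<^sup>2 * (norm x)\<^sup>2"
proof -
  have "(\<Sum>g\<in>F. coeff_sq x t g)
      \<le> (\<Sum>g\<in>F. 2 * coeff_sq x s g + 2 * (cmod (cinner x (exp_op t B g - exp_op s B g)))\<^sup>2)"
    unfolding coeff_sq_def by (rule sum_mono) (metis power2_norm_le_diff cinner_diff_right)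
  also have "\<dots> = 2 * (\<Sum>g\<in>F. coeff_sq x s g)
      + 2 * (\<Sum>g\<in>F. (cmod (cinner x (exp_op t B g - exp_op s B g)))\<^sup>2)"
    by (simp add: sum.distrib sum_distrib_left)
  also have "(\<Sum>g\<in>F. (cmod (cinner x (exp_op t B g - exp_op s B g)))\<^sup>2)
      \<le> C * (\<bar>t - s\<bar> * lip)\<^sup>2 * (norm x)\<^sup>2"
  proof (rule bessel_sum_operator_le)
    show "norm (exp_op t B u - exp_op s B u) \<le> \<bar>t - s\<bar> * lip * norm u" for u
      using norm_exp_op_diff_le[OF tau_pos, of t s u] assms unfolding lip_def by simp
  qed (use assms C_nonneg lip_pos bessel_sum_le in \<open>auto simp: exp_op_add exp_op_scaleC scaleC_diff_right\<close>)
  finally show ?thesis by simp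
qed

lemma continuous_on_coeff_sq: "continuous_on {0..\<tau>} (\<lambda>t. coeff_sq x t g)"
proof -
  have "(norm x * lip * norm g)-lipschitz_on {0..\<tau>} (\<lambda>t. cinner x (exp_op t B g))"
  proof (rule lipschitz_onI)
    fix t s assume ts: "t \<in> {0..\<tau>}" "s \<in> {0..\<tau>}"
    have "dist (cinner x (exp_op t B g)) (cinner x (exp_op s B g))
        = cmod (cinner x (exp_op t B g - exp_op s B g))"
      by (simp add: dist_norm cinner_diff_right)
    also have "\<dots> \<le> norm x * norm (exp_op t B g - exp_op s B g)" by (rule cinner_Cauchy_Schwarz)
    also have "\<dots> \<le> norm x * (\<bar>t - s\<bar> * lip * norm g)"
      using norm_exp_op_diff_le[OF tau_pos, of t s g] ts unfolding lip_def
      by (intro mult_left_mono) auto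
    finally show "dist (cinner x (exp_op t B g)) (cinner x (exp_op s B g))
        \<le> norm x * lip * norm g * dist t s"
      by (simp add: dist_real_def algebra_simps)
  qed (use lip_pos in auto)
  then show ?thesis unfolding coeff_sq_def
    by (intro continuous_intros lipschitz_on_continuous_on)
qed

lemma integrable_coeff_sq: "(\<lambda>t. coeff_sq x t g) integrable_on {0..\<tau>}"
  by (rule integrable_continuous_interval[OF continuous_on_coeff_sq])

lemma integrable_sum_coeff_sq: "(\<lambda>t. \<Sum>g\<in>F. coeff_sq x t g) integrable_on {0..\<tau>}"
  by (cases "finite F") (auto intro!: integrable_sum integrable_coeff_sq)

lemma integral_sum_coeff_sq:
  "integral {0..\<tau>} (\<lambda>t. \<Sum>g\<in>F. coeff_sq x t g) = (\<Sum>g\<in>F. integral {0..\<tau>} (\<lambda>t. coeff_sq x t g))"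
  by (cases "finite F") (auto intro!: integral_sum integrable_coeff_sq)

lemma integral_coeff_sq_nonneg: "integral {0..\<tau>} (\<lambda>t. coeff_sq x t g) \<ge> 0"
  by (rule integral_nonneg[OF integrable_coeff_sq]) (simp add: coeff_sq_nonneg)

lemma sum_integral_coeff_sq_le:
  assumes "\<And>t. t \<in> {0..\<tau>} \<Longrightarrow> (\<Sum>g\<in>F. coeff_sq x t g) \<le> M"
  shows "(\<Sum>g\<in>F. integral {0..\<tau>} (\<lambda>t. coeff_sq x t g)) \<le> \<tau> * M"
proof -
  have "integral {0..\<tau>} (\<lambda>t. \<Sum>g\<in>F. coeff_sq x t g) \<le> integral {0..\<tau>} (\<lambda>t. M)"
    by (rule integral_le[OF integrable_sum_coeff_sq]) (use assms in auto)
  then show ?thesis using tau_pos by (simp add: integral_sum_coeff_sq mult.commute)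
qed

lemma summable_integral_coeff_sq: "(\<lambda>g. integral {0..\<tau>} (\<lambda>t. coeff_sq x t g)) summable_on G"
proof (rule nonneg_bdd_above_summable_on)
  have "(\<Sum>g\<in>F. integral {0..\<tau>} (\<lambda>t. coeff_sq x t g)) \<le> \<tau> * (C * (exp (\<tau> * K))\<^sup>2 * (norm x)\<^sup>2)"
    if "finite F" "F \<subseteq> G" for F
    using that by (intro sum_integral_coeff_sq_le sum_coeff_sq_le) auto
  then show "bdd_above (sum (\<lambda>g. integral {0..\<tau>} (\<lambda>t. coeff_sq x t g)) ` {F. F \<subseteq> G \<and> finite F})"
    by (intro bdd_aboveI[of _ "\<tau> * (C * (exp (\<tau> * K))\<^sup>2 * (norm x)\<^sup>2)"]) auto
qed (simp add: integral_coeff_sq_nonneg)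

lemma cont_energy_le_of_pointwise:
  assumes "\<And>F t. finite F \<Longrightarrow> F \<subseteq> G \<Longrightarrow> t \<in> {0..\<tau>} \<Longrightarrow> (\<Sum>g\<in>F. coeff_sq x t g) \<le> M"
  shows "cont_energy x \<le> \<tau> * M"
  unfolding cont_energy_def
proof (rule infsum_le_finite_sums[OF summable_integral_coeff_sq])
  fix F assume "finite F" "F \<subseteq> G"
  then show "(\<Sum>g\<in>F. integral {0..\<tau>} (\<lambda>t. coeff_sq x t g)) \<le> \<tau> * M"
    using assms by (intro sum_integral_coeff_sq_le) auto
qed

lemma semicont_frame_iff:
  assumes "B = adjoint_op A"
  shows "semicont_frame A G \<tau> \<longleftrightarrow> (\<exists>c>0. \<forall>x. c * (norm x)\<^sup>2 \<le> cont_energy x)"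
proof -
  have Icc: "{0..\<tau>} = insert \<tau> {0..<\<tau>}" using tau_pos by auto
  have integrable: "(\<lambda>t. coeff_sq x t g) integrable_on {0..<\<tau>}" for x g
    using integrable_coeff_sq integrable_on_insert_iff Icc by metis
  have integral: "integral {0..<\<tau>} (\<lambda>t. coeff_sq x t g) = integral {0..\<tau>} (\<lambda>t. coeff_sq x t g)" for x g
    by (rule integral_spike_set) (auto simp: Icc intro: negligible_subset[of "{\<tau>}"])
  define c2 where "c2 = \<tau> * (C * (exp (\<tau> * K))\<^sup>2) + 1"
  have "c2 > 0" unfolding c2_def using tau_pos C_nonneg by (simp add: add_nonneg_pos)
  moreover have "cont_energy x \<le> c2 * (norm x)\<^sup>2" for x
  proof -
    have "cont_energy x \<le> \<tau> * (C * (exp (\<tau> * K))\<^sup>2 * (norm x)\<^sup>2)"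
      by (intro cont_energy_le_of_pointwise sum_coeff_sq_le)
    also have "\<dots> \<le> c2 * (norm x)\<^sup>2" unfolding c2_def by (simp add: algebra_simps)
    finally show ?thesis .
  qed
  ultimately have "(\<exists>c1>0. \<exists>c2>0. \<forall>x. c1 * (norm x)\<^sup>2 \<le> cont_energy x \<and> cont_energy x \<le> c2 * (norm x)\<^sup>2)
      \<longleftrightarrow> (\<exists>c>0. \<forall>x. c * (norm x)\<^sup>2 \<le> cont_energy x)"
    by blast
  then show ?thesis
    unfolding semicont_frame_def assms[symmetric] coeff_sq_def[symmetric] integral
      cont_energy_def[symmetric]
    by (simp add: integrable summable_integral_coeff_sq)
qed

lemma sum_coeff_sq_pairs_le:
  assumes "finite S" "finite F'" "F' \<subseteq> G \<times> S"
  shows "(\<Sum>(g, s)\<in>F'. coeff_sq x s g) \<le> (\<Sum>s\<in>S. \<Sum>g\<in>fst ` F'. coeff_sq x s g)"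
proof -
  have "(\<Sum>(g, s)\<in>F'. coeff_sq x s g) \<le> (\<Sum>(g, s)\<in>fst ` F' \<times> S. coeff_sq x s g)"
    using assms by (intro sum_mono2) (force simp: coeff_sq_nonneg)+
  also have "\<dots> = (\<Sum>s\<in>S. \<Sum>g\<in>fst ` F'. coeff_sq x s g)"
    by (simp add: sum.cartesian_product[symmetric] sum.swap[of _ "fst ` F'"])
  finally show ?thesis .
qed

lemma summable_coeff_sq_pairs:
  assumes "finite S" "S \<subseteq> {0..\<tau>}"
  shows "(\<lambda>(g, s). coeff_sq x s g) summable_on G \<times> S"
proof (rule nonneg_bdd_above_summable_on)
  have "(\<Sum>(g, s)\<in>F'. coeff_sq x s g) \<le> card S * (C * (exp (\<tau> * K))\<^sup>2 * (norm x)\<^sup>2)"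
    if "finite F'" "F' \<subseteq> G \<times> S" for F'
  proof -
    have "(\<Sum>s\<in>S. \<Sum>g\<in>fst ` F'. coeff_sq x s g) \<le> (\<Sum>s\<in>S. C * (exp (\<tau> * K))\<^sup>2 * (norm x)\<^sup>2)"
      using that assms by (intro sum_mono sum_coeff_sq_le) auto
    then show ?thesis using sum_coeff_sq_pairs_le[OF assms(1) that, where x=x] by simp
  qed
  then show "bdd_above (sum (\<lambda>(g, s). coeff_sq x s g) ` {F'. F' \<subseteq> G \<times> S \<and> finite F'})"
    by (intro bdd_aboveI[of _ "card S * (C * (exp (\<tau> * K))\<^sup>2 * (norm x)\<^sup>2)"]) auto
qed (auto simp: coeff_sq_nonneg)

lemma sum_coeff_sq_le_disc_energy:
  assumes "finite S" "S \<subseteq> {0..\<tau>}" "s \<in> S" "finite F" "F \<subseteq> G"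
  shows "(\<Sum>g\<in>F. coeff_sq x s g) \<le> disc_energy S x"
proof -
  have "(\<Sum>g\<in>F. coeff_sq x s g) = (\<Sum>(g, s)\<in>F \<times> {s}. coeff_sq x s g)"
    by (simp add: sum.cartesian_product[symmetric])
  also have "\<dots> \<le> disc_energy S x" unfolding disc_energy_def
    using assms by (intro finite_sum_le_infsum summable_coeff_sq_pairs) (auto simp: coeff_sq_nonneg)
  finally show ?thesis .
qed

lemma frame_family_iff_disc_energy_lower:
  assumes "finite S" "S \<subseteq> {0..\<tau>}"
  shows "frame_family (G \<times> S) (\<lambda>(g, t). exp_op t B g) \<longleftrightarrow> (\<exists>c>0. \<forall>x. c * (norm x)\<^sup>2 \<le> disc_energy S x)"
proof -
  have coeff: "(\<lambda>i. (cmod (cinner x ((\<lambda>(g, t). exp_op t B g) i)))\<^sup>2) = (\<lambda>(g, s). coeff_sq x s g)" for x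
    by (auto simp: coeff_sq_def)
  have "disc_energy S x \<le> card S * (C * (exp (\<tau> * K))\<^sup>2) * (norm x)\<^sup>2" for x
    unfolding disc_energy_def
  proof (rule infsum_le_finite_sums[OF summable_coeff_sq_pairs[OF assms]])
    fix F' assume F': "finite F'" "F' \<subseteq> G \<times> S"
    have "(\<Sum>s\<in>S. \<Sum>g\<in>fst ` F'. coeff_sq x s g) \<le> (\<Sum>s\<in>S. C * (exp (\<tau> * K))\<^sup>2 * (norm x)\<^sup>2)"
      using F' assms by (intro sum_mono sum_coeff_sq_le) auto
    then show "(\<Sum>(g, s)\<in>F'. coeff_sq x s g) \<le> card S * (C * (exp (\<tau> * K))\<^sup>2) * (norm x)\<^sup>2"
      using sum_coeff_sq_pairs_le[OF assms(1) F', where x=x] by (simp add: mult.assoc)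
  qed
  then have "bessel_family (G \<times> S) (\<lambda>(g, t). exp_op t B g)"
    unfolding bessel_family_def coeff disc_energy_def[symmetric]
    using summable_coeff_sq_pairs[OF assms] by blast
  then show ?thesis unfolding frame_family_def coeff disc_energy_def by simp
qed

text \<open>\<open>(1) \<Longrightarrow> (2)\<close>: every \<open>t\<close> is within \<open>\<delta>\<close> of a sample \<open>s\<close>, and moving the
  time by less than \<open>\<delta>\<close> changes the frame sums by a multiple of \<open>\<delta>\<^sup>2 \<parallel>x\<parallel>\<^sup>2\<close>,
  which is absorbed by the continuous lower bound once \<open>\<delta>\<close> is small.\<close>

lemma disc_energy_lower_of_cont_energy_lower:
  assumes c1: "c1 > 0" and lower: "\<And>x. c1 * (norm x)\<^sup>2 \<le> cont_energy x"
  shows "\<exists>\<delta>>0. \<forall>S. finite S \<and> S \<subseteq> {0..\<tau>} \<and> (\<forall>t\<in>{0..\<tau>}. \<exists>s\<in>S. \<bar>t - s\<bar> < \<delta>)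
           \<longrightarrow> (\<exists>c>0. \<forall>x. c * (norm x)\<^sup>2 \<le> disc_energy S x)"
proof -
  obtain \<delta> where \<delta>: "\<delta> > 0" and small: "(4 * \<tau> * C * lip\<^sup>2) * \<delta>\<^sup>2 \<le> c1"
    using exists_small_param[OF c1, of "4 * \<tau> * C * lip\<^sup>2" 1] tau_pos C_nonneg by auto
  have "\<exists>c>0. \<forall>x. c * (norm x)\<^sup>2 \<le> disc_energy S x"
    if S: "finite S" "S \<subseteq> {0..\<tau>}" and dense: "\<forall>t\<in>{0..\<tau>}. \<exists>s\<in>S. \<bar>t - s\<bar> < \<delta>" for S
  proof (intro exI conjI allI)
    show "c1 / (4 * \<tau>) > 0" using c1 tau_pos by simp
    fix x
    have "cont_energy x \<le> \<tau> * (2 * disc_energy S x + 2 * C * (\<delta> * lip)\<^sup>2 * (norm x)\<^sup>2)"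
    proof (rule cont_energy_le_of_pointwise)
      fix F t assume F: "finite F" "F \<subseteq> G" and t: "t \<in> {0..\<tau>}"
      obtain s where s: "s \<in> S" "\<bar>t - s\<bar> < \<delta>" using dense t by blast
      have "(\<Sum>g\<in>F. coeff_sq x t g) \<le> 2 * (\<Sum>g\<in>F. coeff_sq x s g) + 2 * C * (\<bar>t - s\<bar> * lip)\<^sup>2 * (norm x)\<^sup>2"
        using s S F t by (intro sum_coeff_sq_shift_le) auto
      also have "(\<bar>t - s\<bar> * lip)\<^sup>2 \<le> (\<delta> * lip)\<^sup>2"
        using s(2) lip_pos by (intro power_mono mult_right_mono) auto
      also have "(\<Sum>g\<in>F. coeff_sq x s g) \<le> disc_energy S x"
        using S s F by (intro sum_coeff_sq_le_disc_energy)
      finally show "(\<Sum>g\<in>F. coeff_sq x t g) \<le> 2 * disc_energy S x + 2 * C * (\<delta> * lip)\<^sup>2 * (norm x)\<^sup>2"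
        using C_nonneg by (simp add: mult_left_mono mult_right_mono)
    qed
    moreover have "2 * \<tau> * C * (\<delta> * lip)\<^sup>2 * (norm x)\<^sup>2 \<le> c1 / 2 * (norm x)\<^sup>2"
      using small by (intro mult_right_mono) (simp_all add: power_mult_distrib algebra_simps)
    ultimately have "c1 / 2 * (norm x)\<^sup>2 \<le> 2 * \<tau> * disc_energy S x"
      using lower[of x] by (simp add: algebra_simps)
    then show "c1 / (4 * \<tau>) * (norm x)\<^sup>2 \<le> disc_energy S x"
      using tau_pos by (simp add: field_simps)
  qed
  then show ?thesis using \<delta> by blast
qed

text \<open>Comparing the value at a sample \<open>s\<close> with the values on a window of length
  \<open>h\<close> in \<open>[0, \<tau>]\<close> next to \<open>s\<close>, and integrating over the window.\<close>

lemma window_sum_coeff_sq_le: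
  assumes s: "s \<in> {0..\<tau>}" and h: "0 < h" "h \<le> \<tau>" and F: "finite F" "F \<subseteq> G"
  shows "h * (\<Sum>g\<in>F. coeff_sq x s g) \<le> 2 * cont_energy x + h * (2 * C * (h * lip)\<^sup>2 * (norm x)\<^sup>2)"
proof -
  define r where "r = 2 * C * (h * lip)\<^sup>2 * (norm x)\<^sup>2"
  define a where "a = (if s + h \<le> \<tau> then s else \<tau> - h)"
  have window: "{a..a + h} \<subseteq> {0..\<tau>}" unfolding a_def using s h by auto
  have near: "\<bar>s - t\<bar> \<le> h" if "t \<in> {a..a + h}" for t
    using that s unfolding a_def by (auto split: if_splits)
  have integrable: "(\<lambda>t. \<Sum>g\<in>F. coeff_sq x t g) integrable_on {a..a + h}"
    by (rule integrable_on_subinterval[OF integrable_sum_coeff_sq window])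
  have "(\<Sum>g\<in>F. coeff_sq x s g) \<le> 2 * (\<Sum>g\<in>F. coeff_sq x t g) + r" if t: "t \<in> {a..a + h}" for t
  proof -
    have "(\<Sum>g\<in>F. coeff_sq x s g) \<le> 2 * (\<Sum>g\<in>F. coeff_sq x t g) + 2 * C * (\<bar>s - t\<bar> * lip)\<^sup>2 * (norm x)\<^sup>2"
      using t window s F by (intro sum_coeff_sq_shift_le) auto
    also have "(\<bar>s - t\<bar> * lip)\<^sup>2 \<le> (h * lip)\<^sup>2"
      using near[OF t] lip_pos by (intro power_mono mult_right_mono) auto
    finally show ?thesis unfolding r_def using C_nonneg by (simp add: mult_left_mono mult_right_mono)
  qed
  then have "integral {a..a + h} (\<lambda>t. \<Sum>g\<in>F. coeff_sq x s g)
      \<le> integral {a..a + h} (\<lambda>t. 2 * (\<Sum>g\<in>F. coeff_sq x t g) + r)"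
    using integrable by (intro integral_le) (auto intro!: integrable_add integrable_cmul)
  also have "\<dots> = 2 * integral {a..a + h} (\<lambda>t. \<Sum>g\<in>F. coeff_sq x t g) + h * r"
  proof -
    have "(\<lambda>t. 2 * (\<Sum>g\<in>F. coeff_sq x t g)) integrable_on {a..a + h}"
      using integrable_on_cmult_left[OF integrable, of 2] by simp
    then have "integral {a..a + h} (\<lambda>t. 2 * (\<Sum>g\<in>F. coeff_sq x t g) + r)
        = integral {a..a + h} (\<lambda>t. 2 * (\<Sum>g\<in>F. coeff_sq x t g)) + integral {a..a + h} (\<lambda>t. r)"
      by (rule integral_add) auto
    then show ?thesis using h by simp
  qed
  also have "integral {a..a + h} (\<lambda>t. \<Sum>g\<in>F. coeff_sq x t g) \<le> integral {0..\<tau>} (\<lambda>t. \<Sum>g\<in>F. coeff_sq x t g)"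
    by (rule integral_subset_le[OF window integrable integrable_sum_coeff_sq])
       (simp add: sum_nonneg coeff_sq_nonneg)
  also have "\<dots> \<le> cont_energy x"
    unfolding integral_sum_coeff_sq cont_energy_def
    by (rule finite_sum_le_infsum[OF summable_integral_coeff_sq F]) (simp add: integral_coeff_sq_nonneg)
  finally show ?thesis using h unfolding r_def by (simp add: mult.commute)
qed

lemma disc_energy_le_cont_energy:
  assumes S: "finite S" "S \<subseteq> {0..\<tau>}" and h: "0 < h" "h \<le> \<tau>"
  shows "h * disc_energy S x \<le> card S * (2 * cont_energy x + h * (2 * C * (h * lip)\<^sup>2 * (norm x)\<^sup>2))"
proof -
  define R where "R = card S * (2 * cont_energy x + h * (2 * C * (h * lip)\<^sup>2 * (norm x)\<^sup>2))"
  have "disc_energy S x \<le> R / h" unfolding disc_energy_def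
  proof (rule infsum_le_finite_sums[OF summable_coeff_sq_pairs[OF S]])
    fix F' assume F': "finite F'" "F' \<subseteq> G \<times> S"
    have "h * (\<Sum>(g, s)\<in>F'. coeff_sq x s g) \<le> h * (\<Sum>s\<in>S. \<Sum>g\<in>fst ` F'. coeff_sq x s g)"
      using sum_coeff_sq_pairs_le[OF S(1) F', where x=x] h by (simp add: mult_left_mono)
    also have "\<dots> = (\<Sum>s\<in>S. h * (\<Sum>g\<in>fst ` F'. coeff_sq x s g))" by (simp add: sum_distrib_left)
    also have "\<dots> \<le> (\<Sum>s\<in>S. 2 * cont_energy x + h * (2 * C * (h * lip)\<^sup>2 * (norm x)\<^sup>2))"
      using S F' h by (intro sum_mono window_sum_coeff_sq_le) auto
    also have "\<dots> = R" unfolding R_def by simp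
    finally show "(\<Sum>(g, s)\<in>F'. coeff_sq x s g) \<le> R / h" using h by (simp add: field_simps)
  qed
  then show ?thesis using h unfolding R_def by (simp add: field_simps)
qed

text \<open>\<open>(3) \<Longrightarrow> (1)\<close>: for a small window length \<open>h\<close> the error term of the
  previous lemma is absorbed by the frame bound.\<close>

lemma cont_energy_lower_of_disc_energy_lower:
  assumes S: "finite S" "S \<noteq> {}" "S \<subseteq> {0..\<tau>}"
    and c: "c > 0" and lower: "\<And>x. c * (norm x)\<^sup>2 \<le> disc_energy S x"
  shows "\<exists>c'>0. \<forall>x. c' * (norm x)\<^sup>2 \<le> cont_energy x"
proof -
  define n where "n = real (card S)"
  have n: "n > 0" unfolding n_def using S by (simp add: card_gt_0_iff)
  obtain h where h: "h > 0" "h \<le> \<tau>" and small: "(4 * n * C * lip\<^sup>2) * h\<^sup>2 \<le> c"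
    using exists_small_param[OF c, of "4 * n * C * lip\<^sup>2" \<tau>] tau_pos C_nonneg n by auto
  show ?thesis
  proof (intro exI conjI allI)
    show "h * c / (4 * n) > 0" using h c n by simp
    fix x
    have "h * (c * (norm x)\<^sup>2) \<le> h * disc_energy S x" using lower[of x] h by simp
    also have "\<dots> \<le> 2 * n * cont_energy x + h * (2 * n * C * (h * lip)\<^sup>2) * (norm x)\<^sup>2"
      using disc_energy_le_cont_energy[OF S(1,3) h, of x] unfolding n_def by (simp add: algebra_simps)
    also have "h * (2 * n * C * (h * lip)\<^sup>2) * (norm x)\<^sup>2 \<le> h * (c / 2) * (norm x)\<^sup>2"
      using small h by (intro mult_right_mono mult_left_mono) (simp_all add: power_mult_distrib algebra_simps)
    finally have "h * c / 2 * (norm x)\<^sup>2 \<le> 2 * n * cont_energy x" by (simp add: algebra_simps)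
    then show "h * c / (4 * n) * (norm x)\<^sup>2 \<le> cont_energy x" using n by (simp add: field_simps)
  qed
qed

lemma mesh_frames_of_cont_energy_lower:
  assumes "c1 > 0" "\<And>x. c1 * (norm x)\<^sup>2 \<le> cont_energy x"
  shows "\<exists>\<delta>>0. \<forall>ts. admissible_times \<tau> ts \<and> mesh_less \<tau> \<delta> ts \<longrightarrow>
           frame_family (G \<times> set ts) (\<lambda>(g, t). exp_op t B g)"
proof -
  obtain \<delta> where "\<delta> > 0" and \<delta>: "\<And>S. finite S \<and> S \<subseteq> {0..\<tau>} \<and> (\<forall>t\<in>{0..\<tau>}. \<exists>s\<in>S. \<bar>t - s\<bar> < \<delta>)
      \<Longrightarrow> \<exists>c>0. \<forall>x. c * (norm x)\<^sup>2 \<le> disc_energy S x"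
    using disc_energy_lower_of_cont_energy_lower[OF assms] by blast
  have "frame_family (G \<times> set ts) (\<lambda>(g, t). exp_op t B g)"
    if "admissible_times \<tau> ts" "mesh_less \<tau> \<delta> ts" for ts
    using \<delta>[of "set ts"] frame_family_iff_disc_energy_lower admissible_times_subset[OF that(1)]
      admissible_times_dense[OF that] by blast
  then show ?thesis using \<open>\<delta> > 0\<close> by blast
qed

lemma cont_energy_lower_of_admissible_frame:
  assumes adm: "admissible_times \<tau> ts"
    and frame: "frame_family (G \<times> set ts) (\<lambda>(g, t). exp_op t B g)"
  shows "\<exists>c>0. \<forall>x. c * (norm x)\<^sup>2 \<le> cont_energy x"
proof -
  have S: "finite (set ts)" "set ts \<noteq> {}" "set ts \<subseteq> {0..\<tau>}"
    using adm admissible_times_subset[OF adm] by (auto simp: admissible_times_def)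
  then obtain c where "c > 0" "\<And>x. c * (norm x)\<^sup>2 \<le> disc_energy (set ts) x"
    using frame frame_family_iff_disc_energy_lower by blast
  then show ?thesis by (rule cont_energy_lower_of_disc_energy_lower[OF S])
qed

end
lemma exp_frame_setting_adjoint:
  assumes A: "bounded_clinear_op A" and \<tau>: "\<tau> > 0" and bessel: "bessel_family G (\<lambda>g. g)"
  obtains K C where "exp_frame_setting (adjoint_op A) K G C \<tau>"
proof -
  obtain K where K: "bounded_clinear_operator (adjoint_op A) K"
    using bounded_clinear_operator_adjoint[OF A] .
  obtain C0 where C0: "\<And>x. (\<lambda>g. (cmod (cinner x g))\<^sup>2) summable_on G \<and>
      (\<Sum>\<^sub>\<infinity>g\<in>G. (cmod (cinner x g))\<^sup>2) \<le> C0 * (norm x)\<^sup>2"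
    using bessel unfolding bessel_family_def by blast
  have "(\<Sum>g\<in>F. (cmod (cinner y g))\<^sup>2) \<le> \<bar>C0\<bar> * (norm y)\<^sup>2" if "finite F" "F \<subseteq> G" for y F
  proof -
    have "(\<Sum>g\<in>F. (cmod (cinner y g))\<^sup>2) \<le> (\<Sum>\<^sub>\<infinity>g\<in>G. (cmod (cinner y g))\<^sup>2)"
      by (rule finite_sum_le_infsum) (use C0 that in auto)
    also have "\<dots> \<le> \<bar>C0\<bar> * (norm y)\<^sup>2"
      using C0[of y] by (meson abs_ge_self mult_right_mono order_trans zero_le_power2)
    finally show ?thesis .
  qed
  then have "exp_frame_setting (adjoint_op A) K G \<bar>C0\<bar> \<tau>"
    using K \<tau> by (simp add: exp_frame_setting_def exp_frame_setting_axioms_def)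
  then show ?thesis by (rule that)
qed

theorem theorem3p6:
  fixes A :: "'a::chilbert \<Rightarrow> 'a" and G :: "'a set" and \<tau> :: real
  assumes separable: "\<exists>D::'a set. countable D \<and> closure D = UNIV"
    and A_bounded: "bounded_clinear_op A"
    and tau_pos: "0 < \<tau>"
    and G_countable: "countable G"
    and G_bessel: "bessel_family G (\<lambda>g. g)"
  shows "(semicont_frame A G \<tau>
          \<longleftrightarrow> (\<exists>\<delta>>0. \<forall>ts. admissible_times \<tau> ts \<and> mesh_less \<tau> \<delta> ts \<longrightarrow>
                 frame_family (G \<times> set ts) (\<lambda>(g, t). exp_op t (adjoint_op A) g)))
       \<and> (semicont_frame A G \<tau>
          \<longleftrightarrow> (\<exists>ts. admissible_times \<tau> ts \<and>
                 frame_family (G \<times> set ts) (\<lambda>(g, t). exp_op t (adjoint_op A) g)))"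
proof -
  obtain K C where "exp_frame_setting (adjoint_op A) K G C \<tau>"
    using exp_frame_setting_adjoint[OF A_bounded tau_pos G_bessel] .
  then interpret exp_frame_setting "adjoint_op A" K G C \<tau> .
  have cont: "semicont_frame A G \<tau> \<longleftrightarrow> (\<exists>c>0. \<forall>x. c * (norm x)\<^sup>2 \<le> cont_energy x)"
    by (rule semicont_frame_iff) simp
  have "\<exists>\<delta>>0. \<forall>ts. admissible_times \<tau> ts \<and> mesh_less \<tau> \<delta> ts \<longrightarrow>
      frame_family (G \<times> set ts) (\<lambda>(g, t). exp_op t (adjoint_op A) g)" if "semicont_frame A G \<tau>"
    using that cont mesh_frames_of_cont_energy_lower by blast
  moreover have "semicont_frame A G \<tau>" if "admissible_times \<tau> ts"
    and "frame_family (G \<times> set ts) (\<lambda>(g, t). exp_op t (adjoint_op A) g)" for ts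
    using cont cont_energy_lower_of_admissible_frame[OF that] by blast
  ultimately show ?thesis using exists_admissible_times[OF tau_pos] by blast
qed

end
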